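(* Let $\alpha>0$ and $\sigma>0$, and let $\pi_{\alpha,\sigma}$, $(c_n)_{n\ge0}$, $\mathbb F_\sigma(\mathbb C)$ and $\mathcal S$ be as in the context. Then for each $f\in L^2(\alpha\mathbb N_0,\pi_{\alpha,\sigma})$ and each $z\in\mathbb C$, $$(\mathcal Sf)(z)=\int_{\alpha\mathbb N_0} f\,d\pi_{\alpha,\sigma+\alpha z}=\exp\Big(-\frac{\sigma+\alpha z}{\alpha^2}\Big)\sum_{n=0}^\infty f(\alpha n)\,\frac{1}{n!}\Big(\frac{\sigma+\alpha z}{\alpha^2}\Big)^n .$$ In particular, for real $z>-\sigma/\alpha$ the integration is with respect to the probability distribution $\pi_{\alpha,\sigma+\alpha z}$. Moreover, the complex-valued series on the right-hand side converges absolutely and uniformly on compact subsets of $\mathbb C$.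
   Context: For $\alpha>0$ and $w\in\mathbb C$, $\pi_{\alpha,w}$ denotes the complex-valued measure on $\alpha\mathbb N_0=\{0,\alpha,2\alpha,\dots\}$ given by $\pi_{\alpha,w}=\exp(-w/\alpha^2)\sum_{n=0}^\infty \frac{1}{n!}(w/\alpha^2)^n\delta_{\alpha n}$, where $\delta_y$ is the Dirac measure at $y$; for $w>0$ this is a probability measure (for $\alpha=1$ the Poisson distribution with parameter $w$). Fix $\sigma>0$. Let $(c_n)_{n\ge0}$ be the monic polynomial sequence orthogonal with respect to $\pi_{\alpha,\sigma}$; its exponential generating function is $\sum_{n\ge0}\frac{t^n}{n!}c_n(z)=\exp\big(\frac z\alpha\log(1+t\alpha)-\frac{\sigma t}{\alpha}\big)$, and $\|c_n\|^2_{L^2(\alpha\mathbb N_0,\pi_{\alpha,\sigma})}=n!\,\sigma^n$. The Bargmann space $\mathbb F_\sigma(\mathbb C)$ is the Hilbert space of entire functions $f(z)=\sum_n f_nz^n$ with $\sum_n|f_n|^2n!\sigma^n<\infty$, with inner product $(f,g)=\sum_n f_n\overline{g_n}\,n!\,\sigma^n$. The generalized Segal--Bargmann transform $\mathcal S:L^2(\alpha\mathbb N_0,\pi_{\alpha,\sigma})\to\mathbb F_\sigma(\mathbb C)$ is the unitary operator with $(\mathcal Sc_n)(z)=z^n$ for all $n\in\mathbb N_0$. *)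

theory Defs
  imports "HOL-Analysis.Analysis" "HOL-Complex_Analysis.Complex_Analysis"
begin

text \<open>Functions on \<alpha>N0 are represented as f :: nat \<Rightarrow> complex with f n standing for f(\<alpha> n).\<close>

text \<open>Weight of the point \<alpha> n under the complex measure \<pi>_{\<alpha>,w}.\<close>
definition pi_weight :: "real \<Rightarrow> complex \<Rightarrow> nat \<Rightarrow> complex" where
  "pi_weight \<alpha> w n = exp (- w / (of_real \<alpha>)\<^sup>2) * (w / (of_real \<alpha>)\<^sup>2) ^ n / of_nat (fact n)"

definition pi_integral :: "real \<Rightarrow> complex \<Rightarrow> (nat \<Rightarrow> complex) \<Rightarrow> complex" where
  "pi_integral \<alpha> w f = (\<Sum>n. f n * pi_weight \<alpha> w n)"

definition L2pi :: "real \<Rightarrow> real \<Rightarrow> (nat \<Rightarrow> complex) \<Rightarrow> bool" where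
  "L2pi \<alpha> \<sigma> f \<longleftrightarrow> summable (\<lambda>n. (cmod (f n))\<^sup>2 * cmod (pi_weight \<alpha> (of_real \<sigma>) n))"

definition L2pi_inner :: "real \<Rightarrow> real \<Rightarrow> (nat \<Rightarrow> complex) \<Rightarrow> (nat \<Rightarrow> complex) \<Rightarrow> complex" where
  "L2pi_inner \<alpha> \<sigma> f g = (\<Sum>n. f n * cnj (g n) * pi_weight \<alpha> (of_real \<sigma>) n)"

text \<open>Monic orthogonal polynomials c_n via their exponential generating function:
  c_n(x) = n-th t-derivative at t=0 of exp(x/\<alpha> log(1+t\<alpha>) - \<sigma> t/\<alpha>).\<close>
definition cpoly :: "real \<Rightarrow> real \<Rightarrow> nat \<Rightarrow> complex \<Rightarrow> complex" where
  "cpoly \<alpha> \<sigma> n x = (deriv ^^ n)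
     (\<lambda>t. exp (x / of_real \<alpha> * Ln (1 + t * of_real \<alpha>) - of_real \<sigma> * t / of_real \<alpha>)) 0"

definition taylor_coeff :: "(complex \<Rightarrow> complex) \<Rightarrow> nat \<Rightarrow> complex" where
  "taylor_coeff F n = (deriv ^^ n) F 0 / of_nat (fact n)"

definition bargmann :: "real \<Rightarrow> (complex \<Rightarrow> complex) \<Rightarrow> bool" where
  "bargmann \<sigma> F \<longleftrightarrow> F holomorphic_on UNIV \<and>
     summable (\<lambda>n. (cmod (taylor_coeff F n))\<^sup>2 * fact n * \<sigma> ^ n)"

definition bargmann_inner :: "real \<Rightarrow> (complex \<Rightarrow> complex) \<Rightarrow> (complex \<Rightarrow> complex) \<Rightarrow> complex" where
  "bargmann_inner \<sigma> F G =
     (\<Sum>n. taylor_coeff F n * cnj (taylor_coeff G n) * of_nat (fact n) * of_real (\<sigma> ^ n))"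

definition is_SB_transform :: "real \<Rightarrow> real \<Rightarrow> ((nat \<Rightarrow> complex) \<Rightarrow> complex \<Rightarrow> complex) \<Rightarrow> bool" where
  "is_SB_transform \<alpha> \<sigma> S \<longleftrightarrow>
     (\<forall>f. L2pi \<alpha> \<sigma> f \<longrightarrow> bargmann \<sigma> (S f)) \<and>
     (\<forall>f g a b. L2pi \<alpha> \<sigma> f \<longrightarrow> L2pi \<alpha> \<sigma> g \<longrightarrow>
        S (\<lambda>k. a * f k + b * g k) = (\<lambda>z. a * S f z + b * S g z)) \<and>
     (\<forall>f g. L2pi \<alpha> \<sigma> f \<longrightarrow> L2pi \<alpha> \<sigma> g \<longrightarrow>
        bargmann_inner \<sigma> (S f) (S g) = L2pi_inner \<alpha> \<sigma> f g) \<and>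
     (\<forall>F. bargmann \<sigma> F \<longrightarrow> (\<exists>f. L2pi \<alpha> \<sigma> f \<and> S f = F)) \<and>
     (\<forall>n. S (\<lambda>k. cpoly \<alpha> \<sigma> n (of_real (\<alpha> * real k))) = (\<lambda>z. z ^ n))"

end

theory Submission
  imports Defs
begin

(* Since S is unitary with S c_n = z^n, the n-th Taylor coefficient of the entire function S f
   is (f, c_n) / (n! sigma^n).  Hence
     S f z = sum_n (z/sigma)^n / n! * sum_k f(alpha k) * conj c_n(alpha k) * pi_{alpha,sigma}{alpha k}.
   At a lattice point x = alpha k the generating function of the c_n is the entire function
   G_k(t) = (1 + alpha t)^k exp(-sigma t / alpha), so exchanging the two sums gives
   sum_k f(alpha k) * pi_{alpha,sigma}{alpha k} * G_k(z/sigma), and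
   pi_{alpha,sigma}{alpha k} * G_k(z/sigma) = pi_{alpha,sigma+alpha z}{alpha k}.
   The exchange is justified by Cauchy estimates for G_k, which dominate the double series by
   a geometric series times an absolutely convergent L^2 pairing. *)

lemma suminf_eq_infsum:
  fixes f :: "nat \<Rightarrow> 'a::{topological_comm_monoid_add,t2_space}"
  shows "f summable_on UNIV \<Longrightarrow> suminf f = infsum f UNIV"
  by (metis has_sum_imp_sums has_sum_infsum sums_unique)

lemma suminf_swap_dominated:
  fixes T :: "nat \<Rightarrow> nat \<Rightarrow> 'a::banach"
  assumes bound: "\<And>n k. norm (T n k) \<le> u n * v k"
    and "summable u" and "summable v" and "\<And>n. 0 \<le> u n" and "\<And>k. 0 \<le> v k"
  shows "(\<Sum>n. \<Sum>k. T n k) = (\<Sum>k. \<Sum>n. T n k)"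
proof -
  have rows: "T n summable_on UNIV" for n
    by (rule norm_summable_imp_summable_on,
        rule summable_comparison_test'[OF summable_mult[OF \<open>summable v\<close>, of "u n"]])
       (simp add: bound)
  have cols: "(\<lambda>n. T n k) summable_on UNIV" for k
    by (rule norm_summable_imp_summable_on,
        rule summable_comparison_test'[OF summable_mult2[OF \<open>summable u\<close>, of "v k"]])
       (simp add: bound)
  have "((\<lambda>k. u n * v k) has_sum u n * suminf v) UNIV" for n
    using assms by (intro has_sum_cmult_right sums_nonneg_imp_has_sum summable_sums) simp_all
  moreover have "0 \<le> suminf v"
    using assms by (intro suminf_nonneg)
  then have "(\<lambda>n. u n * suminf v) summable_on UNIV"
    using assms by (subst summable_on_UNIV_nonneg_real_iff) (auto intro: summable_mult2)
  ultimately have "(\<lambda>(n, k). u n * v k) summable_on UNIV \<times> UNIV"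
    using assms by (intro summable_on_SigmaI) auto
  then have "(\<lambda>nk. norm ((\<lambda>(n, k). T n k) nk)) summable_on UNIV \<times> UNIV"
    by (rule Infinite_Sum.abs_summable_on_comparison_test') (clarsimp simp: bound)
  then have joint: "(\<lambda>(n, k). T n k) summable_on UNIV \<times> UNIV"
    by (rule Infinite_Sum.abs_summable_summable)
  then have joint_swapped: "(\<lambda>(k, n). T n k) summable_on UNIV \<times> UNIV"
    using summable_on_swap[of "\<lambda>(n, k). T n k" UNIV UNIV] by (simp add: case_prod_unfold)
  have "(\<Sum>n. \<Sum>k. T n k) = infsum (\<lambda>n. infsum (T n) UNIV) UNIV"
    using summable_on_Sigma_banach[OF joint] by (simp add: suminf_eq_infsum rows)
  also have "\<dots> = infsum (\<lambda>k. infsum (\<lambda>n. T n k) UNIV) UNIV"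
    using joint by (rule infsum_swap_banach)
  also have "\<dots> = (\<Sum>k. \<Sum>n. T n k)"
    using summable_on_Sigma_banach[OF joint_swapped] by (simp add: suminf_eq_infsum cols)
  finally show ?thesis .
qed

lemma pi_weight_of_real:
  "pi_weight \<alpha> (of_real s) k = of_real (exp (- s / \<alpha>\<^sup>2) * (s / \<alpha>\<^sup>2) ^ k / fact k)"
  by (simp add: pi_weight_def exp_of_real[symmetric])

lemma norm_pi_weight_of_real:
  "0 \<le> s \<Longrightarrow> norm (pi_weight \<alpha> (of_real s) k) = exp (- s / \<alpha>\<^sup>2) * (s / \<alpha>\<^sup>2) ^ k / fact k"
  unfolding pi_weight_of_real norm_of_real by simp

lemma sums_exp:
  fixes x :: "'a::{real_normed_field,banach}"
  shows "(\<lambda>n. x ^ n / fact n) sums exp x"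
  using exp_converges[of x] by (simp add: scaleR_conv_of_real divide_inverse mult.commute)

lemma pi_weight_sums: "pi_weight \<alpha> w sums 1"
proof -
  define q where "q = w / (of_real \<alpha>)\<^sup>2"
  have "(\<lambda>n. exp (- q) * (q ^ n / fact n)) sums (exp (- q) * exp q)"
    by (intro sums_mult sums_exp)
  then show ?thesis
    unfolding pi_weight_def q_def minus_divide_left
    by (simp add: exp_minus field_simps)
qed

lemma pi_integral_eq_exp_mult_suminf:
  assumes "summable (\<lambda>n. f n * (w / (of_real \<alpha>)\<^sup>2) ^ n / of_nat (fact n))"
  shows "pi_integral \<alpha> w f =
           exp (- w / (of_real \<alpha>)\<^sup>2) * (\<Sum>n. f n * (w / (of_real \<alpha>)\<^sup>2) ^ n / of_nat (fact n))"
  unfolding pi_integral_def pi_weight_def suminf_mult[OF assms, symmetric]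
  by (simp add: mult_ac)

lemma L2pi_inner_abs_summable:
  assumes "L2pi \<alpha> \<sigma> f" and "L2pi \<alpha> \<sigma> g"
  shows "summable (\<lambda>k. norm (f k * cnj (g k) * pi_weight \<alpha> (of_real \<sigma>) k))"
proof (rule summable_comparison_test')
  let ?p = "\<lambda>k. cmod (pi_weight \<alpha> (of_real \<sigma>) k)"
  show "summable (\<lambda>k. ((norm (f k))\<^sup>2 * ?p k + (norm (g k))\<^sup>2 * ?p k) / 2)"
    using assms unfolding L2pi_def by (intro summable_divide summable_add)
  fix k
  have "2 * norm (f k) * norm (g k) * ?p k \<le> ((norm (f k))\<^sup>2 + (norm (g k))\<^sup>2) * ?p k"
    by (intro mult_right_mono sum_squares_bound) simp
  then show "norm (norm (f k * cnj (g k) * pi_weight \<alpha> (of_real \<sigma>) k))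
               \<le> ((norm (f k))\<^sup>2 * ?p k + (norm (g k))\<^sup>2 * ?p k) / 2"
    by (simp add: norm_mult algebra_simps)
qed

lemma L2pi_if_exponentially_bounded:
  assumes "0 \<le> \<sigma>" and bound: "\<And>k. norm (g k) \<le> A * B ^ k"
  shows "L2pi \<alpha> \<sigma> g"
  unfolding L2pi_def norm_pi_weight_of_real[OF assms(1)]
proof (rule summable_comparison_test')
  define c where "c = \<sigma> / \<alpha>\<^sup>2"
  show "summable (\<lambda>k. A\<^sup>2 * exp (- c) * ((B\<^sup>2 * c) ^ k / fact k))"
    by (intro summable_mult sums_summable[OF sums_exp])
  fix k
  have "(norm (g k))\<^sup>2 \<le> (A * B ^ k)\<^sup>2"
    by (rule power_mono[OF bound]) simp
  then have "(norm (g k))\<^sup>2 * (exp (- c) * c ^ k / fact k) \<le> (A * B ^ k)\<^sup>2 * (exp (- c) * c ^ k / fact k)"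
    using assms(1) by (intro mult_right_mono) (simp_all add: c_def)
  moreover have "(B\<^sup>2 * c) ^ k = (B ^ k)\<^sup>2 * c ^ k"
    by (simp add: power_mult_distrib power_mult[symmetric] mult.commute)
  ultimately show "norm ((norm (g k))\<^sup>2 * (exp (- \<sigma> / \<alpha>\<^sup>2) * (\<sigma> / \<alpha>\<^sup>2) ^ k / fact k))
               \<le> A\<^sup>2 * exp (- c) * ((B\<^sup>2 * c) ^ k / fact k)"
    using assms(1) by (simp add: c_def power_mult_distrib mult_ac)
qed

lemma L2pi_summable_norm_exp_series:
  assumes "\<alpha> > 0" and "\<sigma> > 0" and f: "L2pi \<alpha> \<sigma> f" and "0 \<le> Q"
  shows "summable (\<lambda>n. norm (f n) * Q ^ n / fact n)"
proof -
  define c where "c = \<sigma> / \<alpha>\<^sup>2"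
  have "c > 0" using assms by (simp add: c_def)
  (* Chosen so that |g k| * |pi_weight k| = Q^k / k!; g is exponentially bounded, hence in L^2. *)
  define g where "g k = complex_of_real (exp c * (Q / c) ^ k)" for k
  have norm_g: "norm (g k) = exp c * (Q / c) ^ k" for k
    using assms \<open>c > 0\<close> by (simp add: g_def norm_mult norm_power norm_divide)
  have norm_p: "norm (pi_weight \<alpha> (of_real \<sigma>) k) = exp (- c) * c ^ k / fact k" for k
    using assms by (simp add: norm_pi_weight_of_real c_def)
  have "L2pi \<alpha> \<sigma> g"
    by (rule L2pi_if_exponentially_bounded[where A = "exp c" and B = "Q / c"])
       (use assms in \<open>simp_all add: norm_g\<close>)
  then have "summable (\<lambda>k. norm (f k * cnj (g k) * pi_weight \<alpha> (of_real \<sigma>) k))"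
    by (rule L2pi_inner_abs_summable[OF f])
  moreover have "norm (f k * cnj (g k) * pi_weight \<alpha> (of_real \<sigma>) k) = norm (f k) * Q ^ k / fact k" for k
    using \<open>c > 0\<close> by (simp add: norm_mult norm_g norm_p exp_minus field_simps)
  ultimately show ?thesis
    by simp
qed

lemma L2pi_summable_exp_series:
  assumes "\<alpha> > 0" and "\<sigma> > 0" and "L2pi \<alpha> \<sigma> f"
  shows "summable (\<lambda>n. norm (f n * q ^ n / of_nat (fact n)))"
  using L2pi_summable_norm_exp_series[OF assms norm_ge_zero[of q]]
  by (simp add: norm_mult norm_divide norm_power)

lemma L2pi_exp_series_uniformly_convergent:
  assumes "\<alpha> > 0" and "\<sigma> > 0" and "L2pi \<alpha> \<sigma> f" and "0 \<le> Q"
    and bound: "\<And>z. z \<in> K \<Longrightarrow> norm (q z) \<le> Q"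
  shows "uniformly_convergent_on K (\<lambda>N z. \<Sum>n<N. f n * q z ^ n / of_nat (fact n))"
    and "uniformly_convergent_on K (\<lambda>N z. \<Sum>n<N. norm (f n * q z ^ n / of_nat (fact n)))"
proof -
  have term_le: "norm (f n * q z ^ n / of_nat (fact n)) \<le> norm (f n) * Q ^ n / fact n"
    if "z \<in> K" for n z
    unfolding norm_mult norm_divide norm_power of_nat_fact norm_fact
    by (intro divide_right_mono mult_left_mono power_mono bound that) simp_all
  note M = L2pi_summable_norm_exp_series[OF assms(1-4)]
  show "uniformly_convergent_on K (\<lambda>N z. \<Sum>n<N. f n * q z ^ n / of_nat (fact n))"
    by (rule Weierstrass_m_test'[OF term_le M])
  show "uniformly_convergent_on K (\<lambda>N z. \<Sum>n<N. norm (f n * q z ^ n / of_nat (fact n)))"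
    by (rule Weierstrass_m_test'[OF _ M]) (simp only: real_norm_def abs_norm_cancel term_le)
qed

(* The generating function of the c_n from cpoly_def at x = alpha k, where
   exp (x / alpha * Ln (1 + t alpha)) = (1 + t alpha)^k. *)
definition cpoly_genfun :: "real \<Rightarrow> real \<Rightarrow> nat \<Rightarrow> complex \<Rightarrow> complex" where
  "cpoly_genfun \<alpha> \<sigma> k t = (1 + t * of_real \<alpha>) ^ k * exp (- (of_real \<sigma> * t / of_real \<alpha>))"

lemma holomorphic_cpoly_genfun: "cpoly_genfun \<alpha> \<sigma> k holomorphic_on A"
  unfolding cpoly_genfun_def by (intro holomorphic_intros) auto

lemma cnj_cpoly_genfun: "cnj (cpoly_genfun \<alpha> \<sigma> k (cnj w)) = cpoly_genfun \<alpha> \<sigma> k w"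
  by (simp add: cpoly_genfun_def exp_cnj)

lemma cpoly_eq_higher_deriv_genfun:
  assumes "\<alpha> > 0"
  shows "cpoly \<alpha> \<sigma> n (of_real (\<alpha> * real k)) = (deriv ^^ n) (cpoly_genfun \<alpha> \<sigma> k) 0"
  unfolding cpoly_def
proof (rule higher_deriv_cong_ev)
  have "exp (of_real (\<alpha> * real k) / of_real \<alpha> * Ln (1 + t * of_real \<alpha>) - of_real \<sigma> * t / of_real \<alpha>)
          = cpoly_genfun \<alpha> \<sigma> k t"
    if "t \<in> ball 0 (1 / \<alpha>)" for t :: complex
  proof -
    have "norm (t * of_real \<alpha>) < 1"
      using that assms by (simp add: norm_mult field_simps)
    then have nonzero: "1 + t * of_real \<alpha> \<noteq> 0"
      by (metis add.commute add_eq_0_iff norm_minus_cancel norm_one order.irrefl)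
    have k: "of_real (\<alpha> * real k) / of_real \<alpha> = (of_nat k :: complex)"
      using assms by simp
    show ?thesis
      unfolding k cpoly_genfun_def diff_conv_add_uminus exp_add exp_of_nat_mult exp_Ln[OF nonzero] ..
  qed
  then show "\<forall>\<^sub>F t in nhds 0. exp (of_real (\<alpha> * real k) / of_real \<alpha> * Ln (1 + t * of_real \<alpha>)
      - of_real \<sigma> * t / of_real \<alpha>) = cpoly_genfun \<alpha> \<sigma> k t"
    using assms by (intro eventually_nhds_in_open[THEN eventually_mono, of "ball 0 (1 / \<alpha>)"]) auto
qed simp

lemma cpoly_genfun_sums:
  assumes "\<alpha> > 0"
  shows "(\<lambda>n. cnj (cpoly \<alpha> \<sigma> n (of_real (\<alpha> * real k))) / fact n * w ^ n) sums cpoly_genfun \<alpha> \<sigma> k w"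
proof -
  have "(\<lambda>n. (deriv ^^ n) (cpoly_genfun \<alpha> \<sigma> k) 0 / fact n * (cnj w) ^ n) sums cpoly_genfun \<alpha> \<sigma> k (cnj w)"
    using holomorphic_power_series[OF holomorphic_cpoly_genfun, where z = 0 and r = "norm w + 1" and w = "cnj w"] by simp
  then have "(\<lambda>n. cnj ((deriv ^^ n) (cpoly_genfun \<alpha> \<sigma> k) 0 / fact n * (cnj w) ^ n))
               sums cnj (cpoly_genfun \<alpha> \<sigma> k (cnj w))"
    by (simp only: sums_cnj)
  then show ?thesis
    unfolding cpoly_eq_higher_deriv_genfun[OF assms] by (simp add: cnj_cpoly_genfun)
qed

lemma norm_cpoly_genfun_le:
  assumes "\<alpha> > 0" and "\<sigma> \<ge> 0" and "norm w \<le> r"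
  shows "norm (cpoly_genfun \<alpha> \<sigma> k w) \<le> (1 + \<alpha> * r) ^ k * exp (\<sigma> * r / \<alpha>)"
proof -
  have "norm (1 + w * of_real \<alpha>) \<le> 1 + \<alpha> * norm w"
    using norm_triangle_ineq[of 1 "w * of_real \<alpha>"] assms by (simp add: norm_mult mult.commute)
  also have "\<dots> \<le> 1 + \<alpha> * r"
    using assms by simp
  finally have "norm ((1 + w * of_real \<alpha>) ^ k) \<le> (1 + \<alpha> * r) ^ k"
    unfolding norm_power by (intro power_mono) simp_all
  moreover have "- Re w \<le> r"
    using abs_Re_le_cmod[of w] assms(3) by linarith
  then have "\<sigma> * (- Re w) / \<alpha> \<le> \<sigma> * r / \<alpha>"
    using assms by (intro divide_right_mono mult_left_mono) simp_all
  then have "norm (exp (- (of_real \<sigma> * w / of_real \<alpha>))) \<le> exp (\<sigma> * r / \<alpha>)"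
    by simp
  moreover have "0 \<le> r"
    using assms(3) norm_ge_zero order_trans by blast
  ultimately show ?thesis
    unfolding cpoly_genfun_def norm_mult using assms(1) by (intro mult_mono) simp_all
qed

lemma norm_cpoly_le:
  assumes "\<alpha> > 0" and "\<sigma> \<ge> 0" and "r > 0"
  shows "norm (cpoly \<alpha> \<sigma> n (of_real (\<alpha> * real k)))
           \<le> fact n * ((1 + \<alpha> * r) ^ k * exp (\<sigma> * r / \<alpha>)) / r ^ n"
  unfolding cpoly_eq_higher_deriv_genfun[OF assms(1)]
  using assms
  by (intro Cauchy_inequality holomorphic_cpoly_genfun holomorphic_on_imp_continuous_on
      norm_cpoly_genfun_le) (auto simp: dist_norm[symmetric] dist_commute)

lemma L2pi_cpoly:
  assumes "\<alpha> > 0" and "\<sigma> \<ge> 0"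
  shows "L2pi \<alpha> \<sigma> (\<lambda>k. cpoly \<alpha> \<sigma> n (of_real (\<alpha> * real k)))"
  by (rule L2pi_if_exponentially_bounded[where A = "fact n * exp (\<sigma> / \<alpha>)" and B = "1 + \<alpha>"])
     (use norm_cpoly_le[OF assms zero_less_one] assms in \<open>simp_all add: mult_ac\<close>)

lemma taylor_coeff_power: "taylor_coeff (\<lambda>z. z ^ n) m = (if m = n then 1 else 0)"
  using higher_deriv_power[of m 0 n 0]
  by (cases m n rule: linorder_cases) (simp_all add: taylor_coeff_def pochhammer_0_left flip: pochhammer_fact)

lemma bargmann_inner_power:
  "bargmann_inner \<sigma> F (\<lambda>z. z ^ n) = taylor_coeff F n * of_nat (fact n) * of_real (\<sigma> ^ n)"
proof -
  define c where "c = taylor_coeff F n * of_nat (fact n) * of_real (\<sigma> ^ n)"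
  have "(\<lambda>m. taylor_coeff F m * cnj (taylor_coeff (\<lambda>z. z ^ n) m) * of_nat (fact m) * of_real (\<sigma> ^ m))
      = (\<lambda>m. if m = n then c else 0)"
    by (auto simp: taylor_coeff_power c_def)
  then show ?thesis
    unfolding bargmann_inner_def c_def[symmetric] using sums_single[of n "\<lambda>_. c"] by (simp add: sums_iff)
qed

lemma pi_weight_mult_cpoly_genfun:
  assumes "\<alpha> > 0" and "\<sigma> > 0"
  shows "pi_weight \<alpha> (of_real \<sigma>) k * cpoly_genfun \<alpha> \<sigma> k (z / of_real \<sigma>)
           = pi_weight \<alpha> (of_real \<sigma> + of_real \<alpha> * z) k"
proof -
  have parameters:
    "(of_real \<sigma> / (of_real \<alpha>)\<^sup>2) * (1 + z / of_real \<sigma> * of_real \<alpha>)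
          = (of_real \<sigma> + of_real \<alpha> * z) / (of_real \<alpha>)\<^sup>2"
    "- of_real \<sigma> / (of_real \<alpha>)\<^sup>2 + - (of_real \<sigma> * (z / of_real \<sigma>) / of_real \<alpha>)
          = - (of_real \<sigma> + of_real \<alpha> * z) / (of_real \<alpha>)\<^sup>2"
    using assms by (simp_all add: field_simps power2_eq_square)
  have "pi_weight \<alpha> (of_real \<sigma>) k * cpoly_genfun \<alpha> \<sigma> k (z / of_real \<sigma>)
     = exp (- of_real \<sigma> / (of_real \<alpha>)\<^sup>2 + - (of_real \<sigma> * (z / of_real \<sigma>) / of_real \<alpha>))
       * ((of_real \<sigma> / (of_real \<alpha>)\<^sup>2) * (1 + z / of_real \<sigma> * of_real \<alpha>)) ^ k / of_nat (fact k)"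
    unfolding pi_weight_def cpoly_genfun_def power_mult_distrib exp_add by (simp add: mult_ac)
  also have "\<dots> = pi_weight \<alpha> (of_real \<sigma> + of_real \<alpha> * z) k"
    unfolding parameters pi_weight_def ..
  finally show ?thesis .
qed

lemma taylor_coeff_SB_transform:
  assumes "\<alpha> > 0" and "\<sigma> > 0" and SB: "is_SB_transform \<alpha> \<sigma> S" and f: "L2pi \<alpha> \<sigma> f"
  shows "taylor_coeff (S f) n * of_nat (fact n) * of_real (\<sigma> ^ n)
           = L2pi_inner \<alpha> \<sigma> f (\<lambda>k. cpoly \<alpha> \<sigma> n (of_real (\<alpha> * real k)))"
proof -
  let ?c = "\<lambda>k. cpoly \<alpha> \<sigma> n (of_real (\<alpha> * real k))"
  have "L2pi \<alpha> \<sigma> ?c"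
    using assms by (intro L2pi_cpoly) simp_all
  then have "bargmann_inner \<sigma> (S f) (S ?c) = L2pi_inner \<alpha> \<sigma> f ?c"
    using SB f unfolding is_SB_transform_def by blast
  moreover have "S ?c = (\<lambda>z. z ^ n)"
    using SB unfolding is_SB_transform_def by blast
  ultimately show ?thesis
    by (metis bargmann_inner_power)
qed

lemma SB_transform_sums_taylor_series:
  assumes "is_SB_transform \<alpha> \<sigma> S" and "L2pi \<alpha> \<sigma> f"
  shows "(\<lambda>n. taylor_coeff (S f) n * z ^ n) sums S f z"
proof -
  have "S f holomorphic_on UNIV"
    using assms by (simp add: is_SB_transform_def bargmann_def)
  then show ?thesis
    using holomorphic_power_series[of "S f" 0 "norm z + 1" z]
    by (simp add: taylor_coeff_def holomorphic_on_subset)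
qed

lemma cpoly_double_series_dominated:
  assumes "\<alpha> > 0" and "\<sigma> > 0" and f: "L2pi \<alpha> \<sigma> f"
  obtains v where "summable v" and "\<And>k. 0 \<le> v k"
    and "\<And>n k. norm (w ^ n / fact n * (f k * cnj (cpoly \<alpha> \<sigma> n (of_real (\<alpha> * real k)))
                     * pi_weight \<alpha> (of_real \<sigma>) k)) \<le> (1 / 2) ^ n * v k"
proof -
  define r where "r = 2 * norm w + 1"
  define c where "c = \<sigma> / \<alpha>\<^sup>2"
  define v where "v k = exp (\<sigma> * r / \<alpha>) * exp (- c) * (norm (f k) * (c * (1 + \<alpha> * r)) ^ k / fact k)"
    for k
  have "r > 0" and "c > 0"
    using assms by (simp_all add: r_def c_def add_nonneg_pos)
  have norm_p: "norm (pi_weight \<alpha> (of_real \<sigma>) k) = exp (- c) * c ^ k / fact k" for k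
    using assms by (simp add: norm_pi_weight_of_real c_def)
  have "summable v"
    unfolding v_def using assms \<open>r > 0\<close> \<open>c > 0\<close>
    by (intro summable_mult L2pi_summable_norm_exp_series) simp_all
  moreover have "0 \<le> v k" for k
    using assms \<open>r > 0\<close> \<open>c > 0\<close> by (simp add: v_def)
  moreover have "norm (w ^ n / fact n * (f k * cnj (cpoly \<alpha> \<sigma> n (of_real (\<alpha> * real k)))
                   * pi_weight \<alpha> (of_real \<sigma>) k)) \<le> (1 / 2) ^ n * v k" for n k
  proof -
    have "norm (w ^ n / fact n * (f k * cnj (cpoly \<alpha> \<sigma> n (of_real (\<alpha> * real k)))
                   * pi_weight \<alpha> (of_real \<sigma>) k))
          = norm w ^ n / fact n * (norm (f k) * norm (pi_weight \<alpha> (of_real \<sigma>) k))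
            * norm (cpoly \<alpha> \<sigma> n (of_real (\<alpha> * real k)))"
      by (simp add: norm_mult norm_divide norm_power)
    also have "\<dots> \<le> norm w ^ n / fact n * (norm (f k) * norm (pi_weight \<alpha> (of_real \<sigma>) k))
                   * (fact n * ((1 + \<alpha> * r) ^ k * exp (\<sigma> * r / \<alpha>)) / r ^ n)"
      using assms \<open>r > 0\<close> by (intro mult_left_mono norm_cpoly_le) simp_all
    also have "\<dots> = (norm w / r) ^ n * v k"
      by (simp add: v_def norm_p power_divide power_mult_distrib mult_ac)
    also have "\<dots> \<le> (1 / 2) ^ n * v k"
      using \<open>0 \<le> v k\<close> \<open>r > 0\<close>
      by (intro mult_right_mono power_mono) (simp_all add: r_def field_simps)
    finally show ?thesis .
  qed
  ultimately show thesis
    by (rule that)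
qed

lemma SB_transform_eq_pi_integral:
  assumes "\<alpha> > 0" and "\<sigma> > 0" and SB: "is_SB_transform \<alpha> \<sigma> S" and f: "L2pi \<alpha> \<sigma> f"
  shows "S f z = pi_integral \<alpha> (of_real \<sigma> + of_real \<alpha> * z) f"
proof -
  let ?c = "\<lambda>n k. cpoly \<alpha> \<sigma> n (of_real (\<alpha> * real k))"
  let ?p = "pi_weight \<alpha> (of_real \<sigma>)"
  define T where "T n k = (z / of_real \<sigma>) ^ n / fact n * (f k * cnj (?c n k) * ?p k)" for n k
  have rows: "T n sums (taylor_coeff (S f) n * z ^ n)" for n
  proof -
    have "summable (\<lambda>k. f k * cnj (?c n k) * ?p k)"
      using assms by (intro summable_norm_cancel[OF L2pi_inner_abs_summable] L2pi_cpoly) simp_all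
    then have "T n sums ((z / of_real \<sigma>) ^ n / fact n * L2pi_inner \<alpha> \<sigma> f (?c n))"
      unfolding T_def L2pi_inner_def by (intro sums_mult summable_sums)
    also have "(z / of_real \<sigma>) ^ n / fact n * L2pi_inner \<alpha> \<sigma> f (?c n) = taylor_coeff (S f) n * z ^ n"
      unfolding taylor_coeff_SB_transform[OF assms, symmetric]
      using assms by (simp add: field_simps)
    finally show ?thesis .
  qed
  have cols: "(\<lambda>n. T n k) sums (f k * pi_weight \<alpha> (of_real \<sigma> + of_real \<alpha> * z) k)" for k
  proof -
    have "(\<lambda>n. (f k * ?p k) * (cnj (?c n k) / fact n * (z / of_real \<sigma>) ^ n))
            sums ((f k * ?p k) * cpoly_genfun \<alpha> \<sigma> k (z / of_real \<sigma>))"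
      using assms by (intro sums_mult cpoly_genfun_sums)
    then show ?thesis
      unfolding mult.assoc[of "f k"] pi_weight_mult_cpoly_genfun[OF assms(1,2)]
      by (simp add: T_def mult_ac)
  qed
  obtain v where v: "summable v" "\<And>k. 0 \<le> v k"
    and dominated: "\<And>n k. norm (T n k) \<le> (1 / 2) ^ n * v k"
    using cpoly_double_series_dominated[OF assms(1,2) f, of "z / of_real \<sigma>"] unfolding T_def by blast
  have "S f z = (\<Sum>n. taylor_coeff (S f) n * z ^ n)"
    using SB f by (metis SB_transform_sums_taylor_series sums_unique)
  also have "\<dots> = (\<Sum>n. \<Sum>k. T n k)"
    using rows by (simp add: sums_iff)
  also have "\<dots> = (\<Sum>k. \<Sum>n. T n k)"
    by (rule suminf_swap_dominated[OF dominated]) (simp_all add: v summable_geometric)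
  also have "\<dots> = pi_integral \<alpha> (of_real \<sigma> + of_real \<alpha> * z) f"
    using cols by (simp add: sums_iff pi_integral_def)
  finally show ?thesis .
qed

theorem theorem4p2:
  fixes \<alpha> \<sigma> :: real and S :: "(nat \<Rightarrow> complex) \<Rightarrow> complex \<Rightarrow> complex"
  assumes "\<alpha> > 0" and "\<sigma> > 0" and "is_SB_transform \<alpha> \<sigma> S"
  shows "(\<forall>f z. L2pi \<alpha> \<sigma> f \<longrightarrow>
            S f z = pi_integral \<alpha> (of_real \<sigma> + of_real \<alpha> * z) f \<and>
            pi_integral \<alpha> (of_real \<sigma> + of_real \<alpha> * z) f =
              exp (- (of_real \<sigma> + of_real \<alpha> * z) / (of_real \<alpha>)\<^sup>2) *
              (\<Sum>n. f n * ((of_real \<sigma> + of_real \<alpha> * z) / (of_real \<alpha>)\<^sup>2) ^ n / of_nat (fact n)))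
       \<and> (\<forall>x::real. x > - \<sigma> / \<alpha> \<longrightarrow>
            (\<forall>n. pi_weight \<alpha> (of_real (\<sigma> + \<alpha> * x)) n \<in> \<real> \<and>
                 Re (pi_weight \<alpha> (of_real (\<sigma> + \<alpha> * x)) n) \<ge> 0) \<and>
            (\<Sum>n. pi_weight \<alpha> (of_real (\<sigma> + \<alpha> * x)) n) = 1)
       \<and> (\<forall>f. L2pi \<alpha> \<sigma> f \<longrightarrow>
            (\<forall>z. summable (\<lambda>n. norm (f n * ((of_real \<sigma> + of_real \<alpha> * z) / (of_real \<alpha>)\<^sup>2) ^ n / of_nat (fact n)))) \<and>
            (\<forall>K. compact K \<longrightarrow>
               uniformly_convergent_on K
                 (\<lambda>N z. \<Sum>n<N. f n * ((of_real \<sigma> + of_real \<alpha> * z) / (of_real \<alpha>)\<^sup>2) ^ n / of_nat (fact n)) \<and>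
               uniformly_convergent_on K
                 (\<lambda>N z. \<Sum>n<N. norm (f n * ((of_real \<sigma> + of_real \<alpha> * z) / (of_real \<alpha>)\<^sup>2) ^ n / of_nat (fact n)))))"
proof (intro conjI allI impI)
  fix f and z :: complex
  assume f: "L2pi \<alpha> \<sigma> f"
  let ?w = "of_real \<sigma> + of_real \<alpha> * z"
  show "S f z = pi_integral \<alpha> ?w f"
    using assms f by (rule SB_transform_eq_pi_integral)
  show "pi_integral \<alpha> ?w f =
          exp (- ?w / (of_real \<alpha>)\<^sup>2) * (\<Sum>n. f n * (?w / (of_real \<alpha>)\<^sup>2) ^ n / of_nat (fact n))"
    by (intro pi_integral_eq_exp_mult_suminf summable_norm_cancel[OF L2pi_summable_exp_series[OF assms(1,2) f]])
next
  fix x :: real and n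
  assume "x > - \<sigma> / \<alpha>"
  then have "0 < \<sigma> + \<alpha> * x"
    using assms(1) by (simp add: field_simps)
  then show "Re (pi_weight \<alpha> (of_real (\<sigma> + \<alpha> * x)) n) \<ge> 0"
    unfolding pi_weight_of_real Re_complex_of_real by simp
  show "pi_weight \<alpha> (of_real (\<sigma> + \<alpha> * x)) n \<in> \<real>"
    unfolding pi_weight_of_real by (rule Reals_of_real)
next
  fix x :: real
  show "(\<Sum>n. pi_weight \<alpha> (of_real (\<sigma> + \<alpha> * x)) n) = 1"
    using pi_weight_sums by (rule sums_unique[symmetric])
next
  fix f z
  assume "L2pi \<alpha> \<sigma> f"
  then show "summable (\<lambda>n. norm (f n * ((of_real \<sigma> + of_real \<alpha> * z) / (of_real \<alpha>)\<^sup>2) ^ n / of_nat (fact n)))"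
    using assms(1,2) by (intro L2pi_summable_exp_series)
next
  fix f and K :: "complex set"
  assume f: "L2pi \<alpha> \<sigma> f" and "compact K"
  let ?q = "\<lambda>z. (of_real \<sigma> + of_real \<alpha> * z) / (of_real \<alpha>)\<^sup>2"
  have "bounded (?q ` K)"
    using assms(1) \<open>compact K\<close>
    by (intro compact_imp_bounded compact_continuous_image continuous_intros) auto
  then obtain Q where "0 < Q" and bound: "\<And>z. z \<in> K \<Longrightarrow> norm (?q z) \<le> Q"
    by (auto simp: bounded_pos)
  note uniformly_convergent =
    L2pi_exp_series_uniformly_convergent[OF assms(1,2) f less_imp_le[OF \<open>0 < Q\<close>] bound]
  show "uniformly_convergent_on K (\<lambda>N z. \<Sum>n<N. f n * ?q z ^ n / of_nat (fact n))"
    by (rule uniformly_convergent(1))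
  show "uniformly_convergent_on K (\<lambda>N z. \<Sum>n<N. norm (f n * ?q z ^ n / of_nat (fact n)))"
    by (rule uniformly_convergent(2))
qed

end
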